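(* Let $C=c_0c_1\dots c_{m-1}c_0$ and $D=(0)(1)\dots(n-1)(0)$ be reflexive digraph cycles with $D$ non-contractible, let $D$ have orientation string $y_1y_2\dots y_n$ and $C$ have orientation string $x_1\dots x_m$, and let $i\in\{1,\dots,n\}$ be such that $\mathrm{Mon}_1(C,D;i)$ is nonempty, with maximum element $\Phi_i^M$. There is a monotone one-step up edge from $\Phi_i^M$ to some map in $\mathrm{Mon}_1(C,D;i+1)$ if and only if $\sigma^i(D)\,y_{i+1} \leq^* C$ (subscripts of $y$ taken mod $n$ in $\{1,\dots,n\}$).
   Context: A digraph is a binary relation $\to$ on a finite vertex set; reflexive means every vertex has a loop. A digraph cycle $C=c_0c_1\dots c_{m-1}c_0$ (indices mod $m$, $m\ge3$) has underlying graph the cycle with edges $c_ic_{i+1}$; $D=(0)(1)\dots(n-1)(0)$ has vertex set the integers mod $n$; $D$ is non-contractible if it has length at least $4$ or is a directed $3$-cycle. The orientation string of $C$ is $x_1\dots x_m$ where $x_k$ is $+$, $-$ or $*$ according as the edge $c_{k-1}c_k$ is a forward arc only, a backward arc only, or symmetric (both directions); similarly $y_k$ describes the edge $(k-1)(k)$ of $D$. The shift $\sigma^i(D)$ is the string $y_{i+1}\dots y_ny_1\dots y_i$; juxtaposition denotes concatenation. For strings $Y=z_1\dots z_p$ and $X=x_1\dots x_q$, $Y\leq^* X$ means there is a strictly increasing $\alpha:\{1,\dots,p\}\to\{1,\dots,q\}$ with $z_j\in\{x_{\alpha(j)},*\}$ for all $j$. A homomorphism $\phi:C\to D$ satisfies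 $u\to v\Rightarrow\phi(u)\to\phi(v)$; $\mathrm{Hom}(C,D)$ is the digraph on homomorphisms with $\phi\to\phi'$ iff $\phi(u)\to\phi'(v)$ for all arcs $u\to v$ of $C$. Under $\phi$, edge $c_{k-1}c_k$ is increasing, stationary or decreasing as $\phi(c_k)-\phi(c_{k-1})$ is $1,0,-1$; the wind is (number of increasing minus decreasing edges)$/n$. $\mathrm{Mon}_1(C,D;i)$ is the set (induced subgraph) of wind-$1$ homomorphisms $\phi$ in which every edge is increasing or stationary and $\phi(c_0)=i$. For such $\phi$ there are exactly $n$ increasing edges $c_{k-1}c_k$, $k\in\{1,\dots,m\}$ (with $c_m=c_0$); list their indices as $\alpha_\phi(1)<\dots<\alpha_\phi(n)$. Order $\mathrm{Mon}_1(C,D;i)$ by $\phi\ge\phi'$ iff $\alpha_\phi(j)\le\alpha_{\phi'}(j)$ for all $j$; $\Phi_i^M$ denotes its maximum element (which exists when the set is nonempty). A monotone one-step up edge from $\phi$ to $\phi'$ (both wind-$1$ homomorphisms with all edges increasing or stationary) means: for some subpath of $C$ with vertex set $S$ all of whose edges are stationary under $\phi$ (so $\phi(S)=\{d\}$), $\phi'$ agrees with $\phi$ off $S$ and maps $S$ to $d+1$. *)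

theory Defs
  imports Complex_Main
begin

text \<open>Orientation symbols: Plus = forward arc only, Minus = backward arc only,
  Star = symmetric edge.\<close>
datatype orient = Plus | Minus | Star

text \<open>The reflexive digraph cycle with orientation string xs (length m \<ge> 3):
  vertices 0..m-1 (c_k is vertex k), and the edge between vertex u and vertex (u+1) mod m
  has orientation xs ! u (this is x_{u+1} in the paper's 1-based indexing).\<close>
definition cyc_arc :: "orient list \<Rightarrow> nat \<Rightarrow> nat \<Rightarrow> bool" where
  "cyc_arc xs u v \<longleftrightarrow> u < length xs \<and> v < length xs \<and>
     (u = v
      \<or> (v = (u + 1) mod length xs \<and> xs ! u \<in> {Plus, Star})
      \<or> (u = (v + 1) mod length xs \<and> xs ! v \<in> {Minus, Star}))"

definition non_contractible :: "orient list \<Rightarrow> bool" where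
  "non_contractible ys \<longleftrightarrow> length ys \<ge> 4 \<or>
     (length ys = 3 \<and> (ys = [Plus, Plus, Plus] \<or> ys = [Minus, Minus, Minus]))"

definition is_hom :: "orient list \<Rightarrow> orient list \<Rightarrow> (nat \<Rightarrow> nat) \<Rightarrow> bool" where
  "is_hom xs ys \<phi> \<longleftrightarrow> (\<forall>u < length xs. \<phi> u < length ys) \<and>
     (\<forall>u v. cyc_arc xs u v \<longrightarrow> cyc_arc ys (\<phi> u) (\<phi> v))"

text \<open>Edge k (k \<in> {1..m}) is c_{k-1} c_k with c_m = c_0.\<close>
definition increasing_edge :: "orient list \<Rightarrow> orient list \<Rightarrow> (nat \<Rightarrow> nat) \<Rightarrow> nat \<Rightarrow> bool" where
  "increasing_edge xs ys \<phi> k \<longleftrightarrow> \<phi> (k mod length xs) = (\<phi> (k - 1) + 1) mod length ys"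

definition stationary_edge :: "orient list \<Rightarrow> (nat \<Rightarrow> nat) \<Rightarrow> nat \<Rightarrow> bool" where
  "stationary_edge xs \<phi> k \<longleftrightarrow> \<phi> (k mod length xs) = \<phi> (k - 1)"

definition decreasing_edge :: "orient list \<Rightarrow> orient list \<Rightarrow> (nat \<Rightarrow> nat) \<Rightarrow> nat \<Rightarrow> bool" where
  "decreasing_edge xs ys \<phi> k \<longleftrightarrow> \<phi> (k - 1) = (\<phi> (k mod length xs) + 1) mod length ys"

definition incr_edges :: "orient list \<Rightarrow> orient list \<Rightarrow> (nat \<Rightarrow> nat) \<Rightarrow> nat set" where
  "incr_edges xs ys \<phi> = {k \<in> {1..length xs}. increasing_edge xs ys \<phi> k}"

definition decr_edges :: "orient list \<Rightarrow> orient list \<Rightarrow> (nat \<Rightarrow> nat) \<Rightarrow> nat set" where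
  "decr_edges xs ys \<phi> = {k \<in> {1..length xs}. decreasing_edge xs ys \<phi> k}"

definition wind :: "orient list \<Rightarrow> orient list \<Rightarrow> (nat \<Rightarrow> nat) \<Rightarrow> real" where
  "wind xs ys \<phi> = (real (card (incr_edges xs ys \<phi>)) - real (card (decr_edges xs ys \<phi>)))
                    / real (length ys)"

definition mono_wind1 :: "orient list \<Rightarrow> orient list \<Rightarrow> (nat \<Rightarrow> nat) \<Rightarrow> bool" where
  "mono_wind1 xs ys \<phi> \<longleftrightarrow> is_hom xs ys \<phi> \<and> wind xs ys \<phi> = 1 \<and>
     (\<forall>k \<in> {1..length xs}. increasing_edge xs ys \<phi> k \<or> stationary_edge xs \<phi> k)"

text \<open>Mon_1(C,D;i); the vertex i of D is read modulo n.\<close>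
definition Mon1 :: "orient list \<Rightarrow> orient list \<Rightarrow> nat \<Rightarrow> (nat \<Rightarrow> nat) set" where
  "Mon1 xs ys i = {\<phi>. mono_wind1 xs ys \<phi> \<and> \<phi> 0 = i mod length ys}"

text \<open>alpha_phi(j+1) = alpha xs ys phi ! j (0-based list of increasing edge indices, ascending).\<close>
definition alpha :: "orient list \<Rightarrow> orient list \<Rightarrow> (nat \<Rightarrow> nat) \<Rightarrow> nat list" where
  "alpha xs ys \<phi> = sorted_list_of_set (incr_edges xs ys \<phi>)"

definition mon_ge :: "orient list \<Rightarrow> orient list \<Rightarrow> (nat \<Rightarrow> nat) \<Rightarrow> (nat \<Rightarrow> nat) \<Rightarrow> bool" where
  "mon_ge xs ys \<phi> \<phi>' \<longleftrightarrow> (\<forall>j < length ys. alpha xs ys \<phi> ! j \<le> alpha xs ys \<phi>' ! j)"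

definition is_max_Mon1 :: "orient list \<Rightarrow> orient list \<Rightarrow> nat \<Rightarrow> (nat \<Rightarrow> nat) \<Rightarrow> bool" where
  "is_max_Mon1 xs ys i \<Phi> \<longleftrightarrow> \<Phi> \<in> Mon1 xs ys i \<and> (\<forall>\<phi> \<in> Mon1 xs ys i. mon_ge xs ys \<Phi> \<phi>)"

definition mono_up_edge :: "orient list \<Rightarrow> orient list \<Rightarrow> (nat \<Rightarrow> nat) \<Rightarrow> (nat \<Rightarrow> nat) \<Rightarrow> bool" where
  "mono_up_edge xs ys \<phi> \<phi>' \<longleftrightarrow> mono_wind1 xs ys \<phi> \<and> mono_wind1 xs ys \<phi>' \<and>
     (\<exists>a l S d. a < length xs \<and> 1 \<le> l \<and> l \<le> length xs \<and>
        S = {(a + t) mod length xs | t. t < l} \<and>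
        (\<forall>t. t + 1 < l \<longrightarrow> stationary_edge xs \<phi> ((a + t) mod length xs + 1)) \<and>
        \<phi> ` S = {d} \<and>
        (\<forall>v \<in> S. \<phi>' v = (d + 1) mod length ys) \<and>
        (\<forall>v < length xs. v \<notin> S \<longrightarrow> \<phi>' v = \<phi> v))"

definition leq_star :: "orient list \<Rightarrow> orient list \<Rightarrow> bool" where
  "leq_star zs xs \<longleftrightarrow> (\<exists>\<alpha>. strict_mono_on {..<length zs} \<alpha> \<and>
     (\<forall>j < length zs. \<alpha> j < length xs \<and> (zs ! j = xs ! (\<alpha> j) \<or> zs ! j = Star)))"

definition shift :: "nat \<Rightarrow> orient list \<Rightarrow> orient list" where
  "shift i ys = drop i ys @ take i ys"

end

theory Submission
  imports Defs
begin

text \<open>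
  A map in Mon_1(C,D;i) is determined by the set B of tails c_u of its increasing edges: it
  sends c_v to (i + |{b \<in> B. b < v}|) mod n. Conversely, an n-element set B of vertices arises
  in this way exactly when the edge leaving its j-th element admits y_(i+j+1), i.e. when B is
  the image of an embedding witnessing sigma^i(D) \<le>* C.

  A one-step up edge from the maximum Phi to a map of Mon_1(C,D;i+1) raises a set S containing
  c_0 on which Phi is constant. At the last vertex w before S the raised map increases, so
  x_(w+1) admits y_(i+1); and Phi climbs right after S and is back at its initial value at w,
  so all increasing edges of Phi lie before w. Their tails together with w embed
  sigma^i(D) y_(i+1) into C. Conversely, given such an embedding ending at p, maximality of Phi
  (its last increasing edge comes as early as possible) puts every increasing edge of Phi
  before p, and moving the first increasing edge of Phi to p yields the required map; the
  raised set is the cyclic interval from just after p round to that first edge.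
\<close>

section \<open>Residues and finite sets of naturals\<close>

lemma mod_add_eq_self_iff:
  fixes x c n :: nat
  assumes "x < n" "c \<le> n"
  shows "(x + c) mod n = x \<longleftrightarrow> c = 0 \<or> c = n"
proof (cases "x + c < n")
  case True
  then show ?thesis by auto
next
  case False
  then have "(x + c) mod n = x + c - n"
    using assms by (simp add: le_mod_geq)
  then show ?thesis
    using False assms by auto
qed

lemma self_neq_Suc_mod:
  fixes x n :: nat
  assumes "x < n" "2 \<le> n"
  shows "x \<noteq> Suc x mod n"
  using mod_add_eq_self_iff[of x n 1] assms by simp

lemma self_neq_Suc_Suc_mod:
  fixes x n :: nat
  assumes "x < n" "3 \<le> n"
  shows "x \<noteq> Suc (Suc x mod n) mod n"
  using mod_add_eq_self_iff[of x n 2] assms by (simp add: mod_Suc_eq)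

lemma ball_atLeast1_atMost_iff: "(\<forall>k \<in> {1..m}. P k) \<longleftrightarrow> (\<forall>u < m. P (Suc u))"
  unfolding image_Suc_lessThan[symmetric] by blast

lemma card_less_strict_mono_image:
  fixes \<beta> :: "nat \<Rightarrow> nat"
  assumes mono: "strict_mono_on {..<N} \<beta>" and j: "j < N"
  shows "card {c \<in> \<beta> ` {..<N}. c < \<beta> j} = j"
proof -
  have "{c \<in> \<beta> ` {..<N}. c < \<beta> j} = \<beta> ` {..<j}"
    using j strict_mono_on_less[OF mono] by auto
  moreover have "inj_on \<beta> {..<j}"
    using j by (intro inj_on_subset[OF strict_mono_on_imp_inj_on[OF mono]]) auto
  ultimately show ?thesis
    by (simp add: card_image)
qed

lemma strict_mono_enumeration:
  fixes B :: "nat set"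
  assumes "finite B"
  obtains \<beta> where "strict_mono_on {..<card B} \<beta>" "\<beta> ` {..<card B} = B"
proof
  let ?L = "sorted_list_of_set B"
  have L: "length ?L = card B" "set ?L = B"
    using assms by simp_all
  show "strict_mono_on {..<card B} ((!) ?L)"
    using L(1) sorted_wrt_nth_less[OF strict_sorted_list_of_set] by (auto intro!: strict_mono_onI)
  show "(!) ?L ` {..<card B} = B"
    using L by (auto simp: set_conv_nth)
qed

lemma nth_sorted_list_of_set_last:
  fixes A :: "nat set"
  assumes fin: "finite A" and ne: "A \<noteq> {}"
  shows "sorted_list_of_set A ! (card A - 1) = Max A"
proof -
  let ?L = "sorted_list_of_set A"
  have L: "sorted ?L" "set ?L = A" "length ?L = card A"
    using fin by auto
  have card: "0 < card A"
    using fin ne by (simp add: card_gt_0_iff)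
  have "y \<le> ?L ! (card A - 1)" if "y \<in> A" for y
  proof -
    have "y \<in> set ?L"
      using that L by simp
    then obtain k where "k < card A" "y = ?L ! k"
      unfolding in_set_conv_nth L(3) by blast
    then show ?thesis
      using sorted_nth_mono[OF L(1), of k "card A - 1"] L(3) by simp
  qed
  moreover have "?L ! (card A - 1) \<in> A"
    using L card by (metis diff_less nth_mem zero_less_one)
  ultimately show ?thesis
    using fin by (intro Max_eqI[symmetric])
qed

section \<open>Orientations\<close>

definition orient_leq :: "orient \<Rightarrow> orient \<Rightarrow> bool" where
  "orient_leq y x \<longleftrightarrow> y = x \<or> y = Star"

lemma orient_leq_iff:
  "orient_leq y x \<longleftrightarrow>
     (x \<in> {Plus, Star} \<longrightarrow> y \<in> {Plus, Star}) \<and> (x \<in> {Minus, Star} \<longrightarrow> y \<in> {Minus, Star})"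
  by (cases x; cases y) (auto simp: orient_leq_def)

lemma cyc_arc_refl: "x < length ys \<Longrightarrow> cyc_arc ys x x"
  by (simp add: cyc_arc_def)

lemma cyc_arc_forward_iff:
  assumes "3 \<le> length ys" "x < length ys"
  shows "cyc_arc ys x (Suc x mod length ys) \<longleftrightarrow> ys ! x \<in> {Plus, Star}"
proof -
  have "Suc x mod length ys < length ys"
    using assms(2) by (auto intro!: mod_less_divisor)
  then show ?thesis
    using assms self_neq_Suc_mod[of x "length ys"] self_neq_Suc_Suc_mod[of x "length ys"]
    by (auto simp: cyc_arc_def)
qed

lemma cyc_arc_backward_iff:
  assumes "3 \<le> length ys" "x < length ys"
  shows "cyc_arc ys (Suc x mod length ys) x \<longleftrightarrow> ys ! x \<in> {Minus, Star}"
proof -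
  have "Suc x mod length ys < length ys"
    using assms(2) by (auto intro!: mod_less_divisor)
  then show ?thesis
    using assms self_neq_Suc_mod[of x "length ys"] self_neq_Suc_Suc_mod[of x "length ys"]
    by (auto simp: cyc_arc_def)
qed

lemma orient_leq_if_increasing:
  assumes hom: "is_hom xs ys \<phi>" and n3: "3 \<le> length ys" and u: "u < length xs"
    and incr: "\<phi> (Suc u mod length xs) = Suc (\<phi> u) mod length ys"
  shows "orient_leq (ys ! \<phi> u) (xs ! u)"
proof -
  have \<phi>u: "\<phi> u < length ys"
    using hom u by (simp add: is_hom_def)
  have "ys ! \<phi> u \<in> {Plus, Star}" if "xs ! u \<in> {Plus, Star}"
  proof -
    have "cyc_arc xs u (Suc u mod length xs)"
      using that u by (auto simp: cyc_arc_def intro!: mod_less_divisor)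
    then have "cyc_arc ys (\<phi> u) (Suc (\<phi> u) mod length ys)"
      using hom incr unfolding is_hom_def by metis
    then show ?thesis
      using cyc_arc_forward_iff[OF n3 \<phi>u] by simp
  qed
  moreover have "ys ! \<phi> u \<in> {Minus, Star}" if "xs ! u \<in> {Minus, Star}"
  proof -
    have "cyc_arc xs (Suc u mod length xs) u"
      using that u by (auto simp: cyc_arc_def intro!: mod_less_divisor)
    then have "cyc_arc ys (Suc (\<phi> u) mod length ys) (\<phi> u)"
      using hom incr unfolding is_hom_def by metis
    then show ?thesis
      using cyc_arc_backward_iff[OF n3 \<phi>u] by simp
  qed
  ultimately show ?thesis
    by (simp add: orient_leq_iff)
qed

section \<open>Monotone maps of wind one\<close>

definition incr_pos :: "orient list \<Rightarrow> orient list \<Rightarrow> (nat \<Rightarrow> nat) \<Rightarrow> nat set" where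
  "incr_pos xs ys \<phi> = {u. u < length xs \<and> \<phi> (Suc u mod length xs) = Suc (\<phi> u) mod length ys}"

lemma incr_pos_subset: "incr_pos xs ys \<phi> \<subseteq> {..<length xs}"
  by (auto simp: incr_pos_def)

lemma finite_incr_pos [simp]: "finite (incr_pos xs ys \<phi>)"
  using incr_pos_subset by (rule finite_subset) simp

lemma incr_edges_eq_Suc_image: "incr_edges xs ys \<phi> = Suc ` incr_pos xs ys \<phi>"
  unfolding incr_edges_def incr_pos_def increasing_edge_def image_Suc_lessThan[symmetric]
  by (auto simp: image_iff)

lemma wind_eq_card_incr_pos:
  assumes hom: "is_hom xs ys \<phi>" and n3: "3 \<le> length ys"
    and steps: "\<And>u. u < length xs \<Longrightarrow> \<phi> (Suc u mod length xs) \<in> {\<phi> u, Suc (\<phi> u) mod length ys}"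
  shows "wind xs ys \<phi> = card (incr_pos xs ys \<phi>) / length ys"
proof -
  have "\<not> decreasing_edge xs ys \<phi> (Suc u)" if "u < length xs" for u
  proof -
    have \<phi>u: "\<phi> u < length ys"
      using hom that by (simp add: is_hom_def)
    from steps[OF that] consider "\<phi> (Suc u mod length xs) = \<phi> u"
      | "\<phi> (Suc u mod length xs) = Suc (\<phi> u) mod length ys"
      by blast
    then show ?thesis
    proof cases
      case 1
      then show ?thesis
        using self_neq_Suc_mod[OF \<phi>u] n3 by (simp add: decreasing_edge_def)
    next
      case 2
      then show ?thesis
        using self_neq_Suc_Suc_mod[OF \<phi>u n3] by (simp add: decreasing_edge_def)
    qed
  qed
  then have "decr_edges xs ys \<phi> = {}"
    using ball_atLeast1_atMost_iff[of "length xs" "\<lambda>k. \<not> decreasing_edge xs ys \<phi> k"]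
    by (simp add: decr_edges_def)
  moreover have "card (incr_edges xs ys \<phi>) = card (incr_pos xs ys \<phi>)"
    by (simp add: incr_edges_eq_Suc_image card_image)
  ultimately show ?thesis
    by (simp add: wind_def)
qed

lemma mono_wind1_iff:
  assumes n3: "3 \<le> length ys"
  shows "mono_wind1 xs ys \<phi> \<longleftrightarrow> is_hom xs ys \<phi> \<and> card (incr_pos xs ys \<phi>) = length ys \<and>
     (\<forall>u < length xs. \<phi> (Suc u mod length xs) \<in> {\<phi> u, Suc (\<phi> u) mod length ys})"
proof -
  have steps_iff: "(\<forall>k \<in> {1..length xs}. increasing_edge xs ys \<phi> k \<or> stationary_edge xs \<phi> k) \<longleftrightarrow>
      (\<forall>u < length xs. \<phi> (Suc u mod length xs) \<in> {\<phi> u, Suc (\<phi> u) mod length ys})"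
    unfolding ball_atLeast1_atMost_iff by (simp add: increasing_edge_def stationary_edge_def disj_commute)
  have "wind xs ys \<phi> = 1 \<longleftrightarrow> card (incr_pos xs ys \<phi>) = length ys"
    if "is_hom xs ys \<phi>" "\<forall>u < length xs. \<phi> (Suc u mod length xs) \<in> {\<phi> u, Suc (\<phi> u) mod length ys}"
    using wind_eq_card_incr_pos[OF that(1) n3] that(2) n3 by auto
  then show ?thesis
    unfolding mono_wind1_def steps_iff by blast
qed

lemma length_le_if_mono_wind1:
  assumes "mono_wind1 xs ys \<phi>" "3 \<le> length ys"
  shows "length ys \<le> length xs"
proof -
  have "card (incr_pos xs ys \<phi>) = length ys"
    using assms by (simp add: mono_wind1_iff)
  then show ?thesis
    using card_mono[OF _ incr_pos_subset, of xs ys \<phi>] by simp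
qed

lemma mono_wind1_step:
  assumes "mono_wind1 xs ys \<phi>" "3 \<le> length ys" "u < length xs"
  shows "\<phi> (Suc u mod length xs) = (if u \<in> incr_pos xs ys \<phi> then Suc (\<phi> u) mod length ys else \<phi> u)"
  using assms by (auto simp: mono_wind1_iff incr_pos_def)

definition count_map :: "nat \<Rightarrow> nat \<Rightarrow> nat set \<Rightarrow> nat \<Rightarrow> nat" where
  "count_map n i B v = (i + card {b \<in> B. b < v}) mod n"

lemma count_map_Suc:
  assumes "finite B"
  shows "count_map n i B (Suc u) =
    (if u \<in> B then Suc (count_map n i B u) mod n else count_map n i B u)"
proof -
  have "{b \<in> B. b < Suc u} = (if u \<in> B then insert u {b \<in> B. b < u} else {b \<in> B. b < u})"
    by (auto simp: less_Suc_eq)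
  then show ?thesis
    using assms by (simp add: count_map_def mod_Suc_eq)
qed

lemma count_map_step:
  assumes B: "B \<subseteq> {..<m}" and card: "card B = n" and u: "u < m"
  shows "count_map n i B (Suc u mod m) =
    (if u \<in> B then Suc (count_map n i B u) mod n else count_map n i B u)"
proof -
  have "finite B"
    using B by (rule finite_subset) simp
  have "count_map n i B (Suc u mod m) = count_map n i B (Suc u)"
  proof (cases "Suc u < m")
    case True
    then show ?thesis by simp
  next
    case False
    then have "Suc u = m"
      using u by simp
    moreover have "{b \<in> B. b < m} = B"
      using B by auto
    ultimately show ?thesis
      using card by (simp add: count_map_def)
  qed
  then show ?thesis
    using count_map_Suc[OF \<open>finite B\<close>] by simp
qed

lemma count_map_eq_mod_if_beyond:
  assumes "finite X" "card X = n" and beyond: "(\<forall>b \<in> X. v \<le> b) \<or> (\<forall>b \<in> X. b < v)"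
  shows "count_map n j X v = j mod n"
proof -
  have "{b \<in> X. b < v} = {} \<or> {b \<in> X. b < v} = X"
    using beyond by auto
  then show ?thesis
  proof
    assume X_v: "{b \<in> X. b < v} = {}"
    show ?thesis
      unfolding count_map_def X_v by simp
  next
    assume X_v: "{b \<in> X. b < v} = X"
    show ?thesis
      unfolding count_map_def X_v using assms by simp
  qed
qed

lemma Mon1_eq_count_map:
  assumes \<phi>: "\<phi> \<in> Mon1 xs ys i" and n3: "3 \<le> length ys" and v: "v < length xs"
  shows "\<phi> v = count_map (length ys) i (incr_pos xs ys \<phi>) v"
  using v
proof (induction v)
  case 0
  then show ?case
    using \<phi> by (simp add: Mon1_def count_map_def)
next
  case (Suc v)
  have mw: "mono_wind1 xs ys \<phi>"
    using \<phi> by (simp add: Mon1_def)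
  have "\<phi> (Suc v) = \<phi> (Suc v mod length xs)"
    using Suc.prems by simp
  also have "\<dots> = (if v \<in> incr_pos xs ys \<phi> then Suc (\<phi> v) mod length ys else \<phi> v)"
    using mono_wind1_step[OF mw n3 Suc_lessD[OF Suc.prems]] Suc.prems by simp
  also have "\<dots> = count_map (length ys) i (incr_pos xs ys \<phi>) (Suc v)"
    using Suc by (simp add: count_map_Suc)
  finally show ?case .
qed

lemma incr_pos_less_if_returns:
  assumes n3: "3 \<le> length ys" and \<Phi>: "\<Phi> \<in> Mon1 xs ys i"
    and zw: "z \<le> w" "w < length xs"
    and leaves: "\<Phi> z \<noteq> \<Phi> 0" and returns: "\<Phi> w = \<Phi> 0"
  shows "\<forall>b \<in> incr_pos xs ys \<Phi>. b < w"
proof -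
  let ?n = "length ys"
  define P where "P = incr_pos xs ys \<Phi>"
  have finP: "finite P" and cardP: "card P = ?n"
    using \<Phi> n3 by (simp_all add: P_def Mon1_def mono_wind1_iff)
  have \<Phi>0: "\<Phi> 0 = i mod ?n"
    using \<Phi> by (simp add: Mon1_def)
  have count: "\<Phi> v = (i mod ?n + card {b \<in> P. b < v}) mod ?n" if "v < length xs" for v
    using Mon1_eq_count_map[OF \<Phi> n3 that] by (simp add: count_map_def P_def mod_add_left_eq)
  have "card {b \<in> P. b < z} \<noteq> 0"
  proof
    assume c0: "card {b \<in> P. b < z} = 0"
    have "\<Phi> z = (i mod ?n + card {b \<in> P. b < z}) mod ?n"
      using count zw by simp
    then show False
      unfolding c0 using leaves \<Phi>0 by simp
  qed
  moreover have "card {b \<in> P. b < z} \<le> card {b \<in> P. b < w}"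
    using zw(1) finP by (intro card_mono) auto
  moreover have "card {b \<in> P. b < w} = 0 \<or> card {b \<in> P. b < w} = ?n"
  proof -
    have "i mod ?n < ?n"
      using n3 by (auto intro!: mod_less_divisor)
    moreover have "card {b \<in> P. b < w} \<le> ?n"
      using card_mono[OF finP, of "{b \<in> P. b < w}"] cardP by auto
    moreover have "(i mod ?n + card {b \<in> P. b < w}) mod ?n = i mod ?n"
      using count[OF zw(2)] returns \<Phi>0 by simp
    ultimately show ?thesis
      using mod_add_eq_self_iff by blast
  qed
  ultimately have "card {b \<in> P. b < w} = card P"
    using cardP by linarith
  then have "{b \<in> P. b < w} = P"
    using finP by (intro card_subset_eq) auto
  then show ?thesis
    by (auto simp: P_def)
qed

section \<open>Increasing positions and embeddings of shifted strings\<close>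

definition mono_pattern :: "orient list \<Rightarrow> orient list \<Rightarrow> nat \<Rightarrow> nat set \<Rightarrow> bool" where
  "mono_pattern xs ys i B \<longleftrightarrow> B \<subseteq> {..<length xs} \<and> card B = length ys \<and>
     (\<forall>b \<in> B. orient_leq (ys ! count_map (length ys) i B b) (xs ! b))"

lemma mono_pattern_incr_pos:
  assumes n3: "3 \<le> length ys" and \<phi>: "\<phi> \<in> Mon1 xs ys i"
  shows "mono_pattern xs ys i (incr_pos xs ys \<phi>)"
proof -
  have mw: "mono_wind1 xs ys \<phi>"
    using \<phi> by (simp add: Mon1_def)
  have "orient_leq (ys ! count_map (length ys) i (incr_pos xs ys \<phi>) b) (xs ! b)"
    if b: "b \<in> incr_pos xs ys \<phi>" for b
  proof -
    have "b < length xs" "\<phi> (Suc b mod length xs) = Suc (\<phi> b) mod length ys"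
      using b by (auto simp: incr_pos_def)
    then have "orient_leq (ys ! \<phi> b) (xs ! b)"
      using orient_leq_if_increasing mw n3 by (simp add: mono_wind1_def)
    then show ?thesis
      using Mon1_eq_count_map[OF \<phi> n3 \<open>b < length xs\<close>] by simp
  qed
  then show ?thesis
    using incr_pos_subset mw n3 by (simp add: mono_pattern_def mono_wind1_iff)
qed

lemma
  assumes n3: "3 \<le> length ys" and B: "mono_pattern xs ys i B"
  shows count_map_in_Mon1: "count_map (length ys) i B \<in> Mon1 xs ys i"
    and incr_pos_count_map: "incr_pos xs ys (count_map (length ys) i B) = B"
proof -
  let ?m = "length xs" and ?n = "length ys" and ?f = "count_map (length ys) i B"
  have sub: "B \<subseteq> {..<?m}" and card: "card B = ?n"
    and orient: "\<And>b. b \<in> B \<Longrightarrow> orient_leq (ys ! ?f b) (xs ! b)"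
    using B by (auto simp: mono_pattern_def)
  have less: "?f v < ?n" for v
    using n3 by (auto simp: count_map_def intro!: mod_less_divisor)
  have step: "?f (Suc u mod ?m) = (if u \<in> B then Suc (?f u) mod ?n else ?f u)" if "u < ?m" for u
    using count_map_step[OF sub card that] .
  show incr: "incr_pos xs ys ?f = B"
    using step sub self_neq_Suc_mod[OF less] n3 by (auto simp: incr_pos_def split: if_splits)
  have hom: "is_hom xs ys ?f"
    unfolding is_hom_def
  proof (intro conjI allI impI)
    fix u v
    assume "cyc_arc xs u v"
    then consider "u = v" | "u < ?m" "v = Suc u mod ?m" "xs ! u \<in> {Plus, Star}"
      | "v < ?m" "u = Suc v mod ?m" "xs ! v \<in> {Minus, Star}"
      by (auto simp: cyc_arc_def)
    then show "cyc_arc ys (?f u) (?f v)"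
    proof cases
      case 1
      then show ?thesis
        using cyc_arc_refl[OF less] by simp
    next
      case 2
      then show ?thesis
        using step[of u] orient[of u] cyc_arc_forward_iff[OF n3 less] cyc_arc_refl[OF less]
        by (auto simp: orient_leq_iff)
    next
      case 3
      then show ?thesis
        using step[of v] orient[of v] cyc_arc_backward_iff[OF n3 less] cyc_arc_refl[OF less]
        by (auto simp: orient_leq_iff)
    qed
  qed (rule less)
  have "mono_wind1 xs ys ?f"
    unfolding mono_wind1_iff[OF n3] using hom incr card step by auto
  then show "?f \<in> Mon1 xs ys i"
    by (simp add: Mon1_def count_map_def)
qed

lemma nth_shift_snoc:
  assumes i: "i \<le> length ys" and j: "j \<le> length ys"
  shows "(shift i ys @ [ys ! (i mod length ys)]) ! j = ys ! ((i + j) mod length ys)"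
proof -
  consider "j < length ys - i" | "length ys - i \<le> j" "j < length ys" | "j = length ys"
    using j by linarith
  then show ?thesis
  proof cases
    case 1
    then show ?thesis
      using i by (simp add: shift_def nth_append)
  next
    case 2
    then have "(i + j) mod length ys = j - (length ys - i)"
      using i by (simp add: le_mod_geq)
    then show ?thesis
      using 2 i by (simp add: shift_def nth_append min_def)
  next
    case 3
    moreover have "length (shift i ys) = length ys"
      by (simp add: shift_def)
    ultimately show ?thesis
      by (simp add: nth_append)
  qed
qed

lemma mono_pattern_image_iff:
  assumes mono: "strict_mono_on {..<length ys} \<beta>"
  shows "mono_pattern xs ys i (\<beta> ` {..<length ys}) \<longleftrightarrow>
    (\<forall>j < length ys. \<beta> j < length xs \<and> orient_leq (ys ! ((i + j) mod length ys)) (xs ! \<beta> j))"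
proof -
  let ?n = "length ys"
  have "card (\<beta> ` {..<?n}) = ?n"
    using strict_mono_on_imp_inj_on[OF mono] by (simp add: card_image)
  moreover have "count_map ?n i (\<beta> ` {..<?n}) (\<beta> j) = (i + j) mod ?n" if "j < ?n" for j
    using card_less_strict_mono_image[OF mono that] by (simp add: count_map_def)
  ultimately show ?thesis
    by (auto simp: mono_pattern_def)
qed

lemma leq_star_shift_snoc_iff:
  assumes i: "i \<le> length ys"
  shows "leq_star (shift i ys @ [ys ! (i mod length ys)]) xs \<longleftrightarrow>
    (\<exists>B w. mono_pattern xs ys i B \<and> w < length xs \<and> (\<forall>b \<in> B. b < w) \<and>
       orient_leq (ys ! (i mod length ys)) (xs ! w))"
    (is "leq_star ?zs xs \<longleftrightarrow> _")
proof -
  let ?n = "length ys"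
  have len: "length ?zs = Suc ?n"
    by (simp add: shift_def)
  have zs: "?zs ! j = ys ! ((i + j) mod ?n)" if "j < Suc ?n" for j
    using nth_shift_snoc[OF i] that by simp
  have leq_star_iff: "leq_star ?zs xs \<longleftrightarrow> (\<exists>\<beta>. strict_mono_on {..<Suc ?n} \<beta> \<and>
      (\<forall>j < Suc ?n. \<beta> j < length xs \<and> orient_leq (ys ! ((i + j) mod ?n)) (xs ! \<beta> j)))"
    unfolding leq_star_def len orient_leq_def using zs by auto
  show ?thesis
  proof
    assume "leq_star ?zs xs"
    then obtain \<beta> where mono: "strict_mono_on {..<Suc ?n} \<beta>"
      and \<beta>: "\<forall>j < Suc ?n. \<beta> j < length xs \<and> orient_leq (ys ! ((i + j) mod ?n)) (xs ! \<beta> j)"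
      unfolding leq_star_iff by blast
    have "strict_mono_on {..<?n} \<beta>"
      using mono by (rule monotone_on_subset) auto
    then have "mono_pattern xs ys i (\<beta> ` {..<?n})"
      using \<beta> by (simp add: mono_pattern_image_iff)
    moreover have "\<forall>b \<in> \<beta> ` {..<?n}. b < \<beta> ?n"
      using strict_mono_onD[OF mono] by auto
    moreover have "\<beta> ?n < length xs" "orient_leq (ys ! (i mod ?n)) (xs ! \<beta> ?n)"
      using \<beta> by auto
    ultimately show "\<exists>B w. mono_pattern xs ys i B \<and> w < length xs \<and> (\<forall>b \<in> B. b < w) \<and>
        orient_leq (ys ! (i mod ?n)) (xs ! w)"
      by blast
  next
    assume "\<exists>B w. mono_pattern xs ys i B \<and> w < length xs \<and> (\<forall>b \<in> B. b < w) \<and>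
        orient_leq (ys ! (i mod ?n)) (xs ! w)"
    then obtain B w where B: "mono_pattern xs ys i B" and w: "w < length xs" "\<forall>b \<in> B. b < w"
      and orient_w: "orient_leq (ys ! (i mod ?n)) (xs ! w)"
      by blast
    have "finite B" "card B = ?n"
      using B by (auto simp: mono_pattern_def intro: finite_subset)
    then obtain \<beta> where mono: "strict_mono_on {..<?n} \<beta>" and B_eq: "\<beta> ` {..<?n} = B"
      by (metis strict_mono_enumeration)
    define \<beta>' where "\<beta>' j = (if j < ?n then \<beta> j else w)" for j
    have "strict_mono_on {..<Suc ?n} \<beta>'"
      using strict_mono_onD[OF mono] w(2) B_eq by (auto simp: \<beta>'_def intro!: strict_mono_onI)
    moreover have "\<forall>j < ?n. \<beta> j < length xs \<and> orient_leq (ys ! ((i + j) mod ?n)) (xs ! \<beta> j)"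
      using B B_eq mono_pattern_image_iff[OF mono] by simp
    ultimately show "leq_star ?zs xs"
      unfolding leq_star_iff using w(1) orient_w by (auto simp: \<beta>'_def less_Suc_eq)
  qed
qed

section \<open>The maximum of the order\<close>

lemma alpha_last:
  assumes mw: "mono_wind1 xs ys \<phi>" and n3: "3 \<le> length ys"
  shows "alpha xs ys \<phi> ! (length ys - 1) = Suc (Max (incr_pos xs ys \<phi>))"
proof -
  have card: "card (incr_pos xs ys \<phi>) = length ys"
    using mw n3 by (simp add: mono_wind1_iff)
  then have ne: "incr_pos xs ys \<phi> \<noteq> {}"
    using n3 by auto
  have "card (Suc ` incr_pos xs ys \<phi>) = length ys"
    using card by (simp add: card_image)
  then have "alpha xs ys \<phi> ! (length ys - 1) = Max (Suc ` incr_pos xs ys \<phi>)"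
    using nth_sorted_list_of_set_last[of "Suc ` incr_pos xs ys \<phi>"] ne
    by (simp add: alpha_def incr_edges_eq_Suc_image)
  also have "\<dots> = Suc (Max (incr_pos xs ys \<phi>))"
    using ne by (intro mono_Max_commute[symmetric]) (auto simp: mono_Suc)
  finally show ?thesis .
qed

lemma mon_ge_Max_incr_pos_le:
  assumes "mon_ge xs ys \<phi> \<psi>" "mono_wind1 xs ys \<phi>" "mono_wind1 xs ys \<psi>" and n3: "3 \<le> length ys"
  shows "Max (incr_pos xs ys \<phi>) \<le> Max (incr_pos xs ys \<psi>)"
proof -
  have "length ys - 1 < length ys"
    using n3 by simp
  then have "alpha xs ys \<phi> ! (length ys - 1) \<le> alpha xs ys \<psi> ! (length ys - 1)"
    using assms(1) by (simp add: mon_ge_def)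
  then show ?thesis
    using alpha_last[OF assms(2) n3] alpha_last[OF assms(3) n3] by simp
qed

lemma incr_pos_less_if_max:
  assumes n3: "3 \<le> length ys" and max: "is_max_Mon1 xs ys i \<Phi>"
    and B: "mono_pattern xs ys i B" and w: "\<forall>b \<in> B. b < w"
  shows "\<forall>b \<in> incr_pos xs ys \<Phi>. b < w"
proof -
  let ?\<phi> = "count_map (length ys) i B"
  have \<Phi>: "\<Phi> \<in> Mon1 xs ys i" and ge: "mon_ge xs ys \<Phi> ?\<phi>"
    using max count_map_in_Mon1[OF n3 B] by (auto simp: is_max_Mon1_def)
  have finB: "finite B" and ne: "B \<noteq> {}"
    using B n3 by (auto simp: mono_pattern_def intro: finite_subset)
  have "Max (incr_pos xs ys \<Phi>) \<le> Max (incr_pos xs ys ?\<phi>)"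
    using ge \<Phi> count_map_in_Mon1[OF n3 B] n3
    by (intro mon_ge_Max_incr_pos_le) (simp_all add: Mon1_def)
  also have "\<dots> = Max B"
    using n3 B by (simp add: incr_pos_count_map)
  also have "\<dots> < w"
    using finB ne w by simp
  finally show ?thesis
    using Max_ge[OF finite_incr_pos] le_less_trans by blast
qed

section \<open>Monotone one-step up edges\<close>

text \<open>A monotone one-step up edge, without the requirement that S be the vertex set of a
  subpath.\<close>

locale one_step_up =
  fixes xs ys :: "orient list" and \<Phi> \<phi>' :: "nat \<Rightarrow> nat" and S :: "nat set" and d :: nat
  assumes n3: "3 \<le> length ys"
    and mono_\<Phi>: "mono_wind1 xs ys \<Phi>" and mono_\<phi>': "mono_wind1 xs ys \<phi>'"
    and \<Phi>_S: "\<And>v. v \<in> S \<Longrightarrow> \<Phi> v = d"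
    and \<phi>'_S: "\<And>v. v \<in> S \<Longrightarrow> \<phi>' v = Suc d mod length ys"
    and off_S: "\<And>v. v < length xs \<Longrightarrow> v \<notin> S \<Longrightarrow> \<phi>' v = \<Phi> v"
begin

lemma mono_up_edgeI:
  assumes a: "a < length xs" and l: "1 \<le> l" "l \<le> length xs"
    and S: "S = {(a + t) mod length xs | t. t < l}"
  shows "mono_up_edge xs ys \<Phi> \<phi>'"
proof -
  have stat: "stationary_edge xs \<Phi> ((a + t) mod length xs + 1)" if "t + 1 < l" for t
  proof -
    have "(a + t) mod length xs \<in> S" "(a + Suc t) mod length xs \<in> S"
      using that S by auto
    moreover have "Suc ((a + t) mod length xs) mod length xs = (a + Suc t) mod length xs"
      by (simp add: mod_Suc_eq)
    ultimately show ?thesis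
      using \<Phi>_S by (simp add: stationary_edge_def)
  qed
  have "a \<in> S"
    using S a l by force
  then have "\<Phi> ` S = {d}"
    using \<Phi>_S by blast
  moreover have "\<forall>t. t + 1 < l \<longrightarrow> stationary_edge xs \<Phi> ((a + t) mod length xs + 1)"
    using stat by blast
  moreover have "\<forall>v \<in> S. \<phi>' v = (d + 1) mod length ys"
    using \<phi>'_S by simp
  moreover have "\<forall>v < length xs. v \<notin> S \<longrightarrow> \<phi>' v = \<Phi> v"
    using off_S by blast
  ultimately show ?thesis
    unfolding mono_up_edge_def using mono_\<Phi> mono_\<phi>' a l S by blast
qed

lemma values_less: "v < length xs \<Longrightarrow> \<Phi> v < length ys" "v < length xs \<Longrightarrow> \<phi>' v < length ys"
  using mono_\<Phi> mono_\<phi>' by (simp_all add: mono_wind1_def is_hom_def)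

lemma enter_S:
  assumes u: "u < length xs" "u \<notin> S" and next_u: "Suc u mod length xs \<in> S"
  shows "\<Phi> u = d" and "\<phi>' (Suc u mod length xs) = Suc (\<phi>' u) mod length ys"
proof -
  let ?n = "length ys" and ?v = "Suc u mod length xs"
  have v: "?v < length xs"
    using u by (auto intro!: mod_less_divisor)
  have x: "\<Phi> u < ?n" and d: "d < ?n"
    using values_less u v \<Phi>_S[OF next_u] by auto
  have "d \<in> {\<Phi> u, Suc (\<Phi> u) mod ?n}"
    using mono_\<Phi> u(1) \<Phi>_S[OF next_u] n3 by (auto simp: mono_wind1_iff)
  moreover have "Suc d mod ?n \<in> {\<Phi> u, Suc (\<Phi> u) mod ?n}"
    using mono_\<phi>' u \<phi>'_S[OF next_u] off_S n3 by (auto simp: mono_wind1_iff)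
  ultimately show "\<Phi> u = d"
    using self_neq_Suc_mod[OF d] self_neq_Suc_Suc_mod[OF x n3] n3 by auto
  then show "\<phi>' ?v = Suc (\<phi>' u) mod ?n"
    using \<phi>'_S[OF next_u] off_S u by simp
qed

lemma leave_S:
  assumes u: "u < length xs" "u \<in> S" and next_u: "Suc u mod length xs \<notin> S"
  shows "\<Phi> (Suc u mod length xs) = Suc d mod length ys"
proof -
  let ?n = "length ys" and ?v = "Suc u mod length xs"
  have v: "?v < length xs"
    using u by (auto intro!: mod_less_divisor)
  have d: "d < ?n"
    using values_less u \<Phi>_S[OF u(2)] by auto
  have "\<Phi> ?v \<in> {d, Suc d mod ?n}"
    using mono_\<Phi> u \<Phi>_S n3 by (auto simp: mono_wind1_iff)
  moreover have "\<Phi> ?v \<in> {Suc d mod ?n, Suc (Suc d mod ?n) mod ?n}"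
    using mono_\<phi>' u \<phi>'_S off_S[OF v next_u] n3 by (auto simp: mono_wind1_iff)
  ultimately show ?thesis
    using self_neq_Suc_mod[OF d] self_neq_Suc_Suc_mod[OF d n3] n3 by auto
qed

lemma exists_vertex_not_in_S: "\<exists>v < length xs. v \<notin> S"
proof (rule ccontr)
  assume "\<not> ?thesis"
  then have all: "v \<in> S" if "v < length xs" for v
    using that by blast
  have "incr_pos xs ys \<phi>' = {}"
  proof -
    have "u \<notin> incr_pos xs ys \<phi>'" if "u < length xs" for u
    proof -
      have "Suc u mod length xs < length xs"
        using that by (auto intro!: mod_less_divisor)
      then have "\<phi>' (Suc u mod length xs) = \<phi>' u"
        using \<phi>'_S all that by simp
      then show ?thesis
        using self_neq_Suc_mod[OF values_less(2)[OF that]] n3 by (simp add: incr_pos_def)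
    qed
    then show ?thesis
      using incr_pos_subset by blast
  qed
  then show False
    using mono_\<phi>' n3 by (simp add: mono_wind1_iff)
qed

lemma boundary_of_S:
  assumes "0 \<in> S"
  obtains z w where "z \<le> w" "w < length xs" "\<Phi> z = Suc d mod length ys" "\<Phi> w = d"
    "orient_leq (ys ! d) (xs ! w)"
proof -
  let ?m = "length xs"
  define T where "T = {v. v < ?m \<and> v \<notin> S}"
  have T: "finite T" "T \<noteq> {}"
    using exists_vertex_not_in_S by (auto simp: T_def)
  \<comment> \<open>since \<open>0 \<in> S\<close>, z is the first vertex after S and w the last one before S\<close>
  define z where "z = Min T"
  define w where "w = Max T"
  have zw: "z \<in> T" "w \<in> T" "z \<le> w"
    using T by (simp_all add: z_def w_def)
  have "0 \<notin> T"
    using \<open>0 \<in> S\<close> by (simp add: T_def)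
  then have "z \<noteq> 0"
    using zw(1) by metis
  then have "z - 1 \<notin> T"
    using T by (metis Min_le diff_less less_le_not_le zero_less_one z_def neq0_conv)
  then have "z - 1 \<in> S" "Suc (z - 1) mod ?m = z"
    using zw(1) \<open>z \<noteq> 0\<close> by (auto simp: T_def)
  then have \<Phi>_z: "\<Phi> z = Suc d mod length ys"
    using leave_S[of "z - 1"] zw(1) by (auto simp: T_def)
  have "Suc w mod ?m \<in> S"
  proof (cases "Suc w < ?m")
    case True
    then have "Suc w \<notin> T"
      using Max_ge[OF T(1), of "Suc w"] w_def by fastforce
    then show ?thesis
      using True by (simp add: T_def)
  next
    case False
    then have "Suc w = ?m"
      using zw(2) by (simp add: T_def)
    then show ?thesis
      using \<open>0 \<in> S\<close> by simp
  qed
  then have \<Phi>_w: "\<Phi> w = d" and incr: "\<phi>' (Suc w mod ?m) = Suc (\<phi>' w) mod length ys"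
    using enter_S[of w] zw(2) by (auto simp: T_def)
  have "orient_leq (ys ! \<phi>' w) (xs ! w)"
    using orient_leq_if_increasing[OF _ n3 _ incr] mono_\<phi>' zw(2) by (auto simp: mono_wind1_def T_def)
  moreover have "\<phi>' w = d"
    using off_S \<Phi>_w zw(2) by (auto simp: T_def)
  ultimately show thesis
    using that zw \<Phi>_z \<Phi>_w by (auto simp: T_def)
qed

lemma witness_after_incr_pos:
  assumes \<Phi>: "\<Phi> \<in> Mon1 xs ys i" and \<phi>'0: "\<phi>' 0 = (i + 1) mod length ys"
  obtains w where "w < length xs" "\<forall>b \<in> incr_pos xs ys \<Phi>. b < w"
    "orient_leq (ys ! (i mod length ys)) (xs ! w)"
proof -
  let ?n = "length ys"
  have "0 < length xs"
    using length_le_if_mono_wind1[OF mono_\<Phi> n3] n3 by linarith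
  have \<Phi>0: "\<Phi> 0 = i mod ?n"
    using \<Phi> by (simp add: Mon1_def)
  have i_less: "i mod ?n < ?n"
    using n3 by (auto intro!: mod_less_divisor)
  have "0 \<in> S"
  proof (rule ccontr)
    assume "0 \<notin> S"
    then have "\<phi>' 0 = \<Phi> 0"
      using off_S \<open>0 < length xs\<close> by simp
    then show False
      using \<phi>'0 \<Phi>0 self_neq_Suc_mod[OF i_less] n3 by (simp add: mod_Suc_eq)
  qed
  then have d: "d = i mod ?n"
    using \<Phi>_S \<Phi>0 by simp
  obtain z w where zw: "z \<le> w" "w < length xs" "\<Phi> z = Suc d mod ?n" "\<Phi> w = d"
    and orient_w: "orient_leq (ys ! d) (xs ! w)"
    using boundary_of_S[OF \<open>0 \<in> S\<close>] .
  have "\<Phi> z \<noteq> \<Phi> 0"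
    using zw(3) \<Phi>0 d self_neq_Suc_mod[OF i_less] n3 by simp
  then have "\<forall>b \<in> incr_pos xs ys \<Phi>. b < w"
    using incr_pos_less_if_returns[OF n3 \<Phi> zw(1,2)] zw(4) \<Phi>0 d by simp
  then show thesis
    using that zw(2) orient_w d by blast
qed

end

lemma mono_up_edge_witness:
  assumes n3: "3 \<le> length ys" and \<Phi>: "\<Phi> \<in> Mon1 xs ys i" and \<phi>': "\<phi>' \<in> Mon1 xs ys (i + 1)"
    and up: "mono_up_edge xs ys \<Phi> \<phi>'"
  obtains w where "w < length xs" "\<forall>b \<in> incr_pos xs ys \<Phi>. b < w"
    "orient_leq (ys ! (i mod length ys)) (xs ! w)"
proof -
  from up obtain S d where "mono_wind1 xs ys \<Phi>" "mono_wind1 xs ys \<phi>'" "\<Phi> ` S = {d}"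
    "\<forall>v \<in> S. \<phi>' v = (d + 1) mod length ys" "\<forall>v < length xs. v \<notin> S \<longrightarrow> \<phi>' v = \<Phi> v"
    unfolding mono_up_edge_def by blast
  then interpret one_step_up xs ys \<Phi> \<phi>' S d
    using n3 by unfold_locales auto
  have "\<phi>' 0 = (i + 1) mod length ys"
    using \<phi>' by (simp add: Mon1_def)
  then show thesis
    using witness_after_incr_pos[OF \<Phi>] that by blast
qed

lemma count_map_move_Min:
  fixes P :: "nat set"
  assumes fin: "finite P" and ne: "P \<noteq> {}" and below: "\<forall>b \<in> P. b < p"
    and v: "Min P < v" "v \<le> p"
  shows "count_map n (Suc i) (insert p (P - {Min P})) v = count_map n i P v"
proof -
  let ?q = "Min P" and ?B = "insert p (P - {Min P})"
  have "?q \<in> P"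
    using fin ne by simp
  then have "{b \<in> P. b < v} = insert ?q {b \<in> ?B. b < v}" "?q \<notin> {b \<in> ?B. b < v}"
    using v below by auto
  then have "card {b \<in> P. b < v} = Suc (card {b \<in> ?B. b < v})"
    using fin by simp
  then show ?thesis
    by (simp add: count_map_def)
qed

lemma mono_pattern_move_Min:
  assumes pat: "mono_pattern xs ys i P" and n3: "3 \<le> length ys"
    and p: "p < length xs" and below: "\<forall>b \<in> P. b < p"
    and orient_p: "orient_leq (ys ! (i mod length ys)) (xs ! p)"
  shows "mono_pattern xs ys (Suc i) (insert p (P - {Min P}))"
proof -
  let ?n = "length ys" and ?B = "insert p (P - {Min P})"
  have sub: "P \<subseteq> {..<length xs}" and card: "card P = ?n"
    and orient: "\<And>b. b \<in> P \<Longrightarrow> orient_leq (ys ! count_map ?n i P b) (xs ! b)"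
    using pat by (auto simp: mono_pattern_def)
  have fin: "finite P"
    using sub by (rule finite_subset) simp
  have ne: "P \<noteq> {}"
    using card n3 by auto
  have "p \<notin> P"
    using below by blast
  have "card ?B = ?n"
    using fin ne card \<open>p \<notin> P\<close> card_gt_0_iff[of P] by (simp add: card_Diff_singleton)
  moreover have "orient_leq (ys ! count_map ?n (Suc i) ?B b) (xs ! b)" if "b \<in> ?B" for b
  proof (cases "b = p")
    case True
    have "Min P < p"
      using fin ne below by simp
    then have "count_map ?n (Suc i) ?B p = i mod ?n"
      using count_map_move_Min[OF fin ne below] count_map_eq_mod_if_beyond[OF fin card] below
      by simp
    then show ?thesis
      using True orient_p by simp
  next
    case False
    then have "b \<in> P" "Min P < b" "b \<le> p"
      using that fin below by (auto simp: order.not_eq_order_implies_strict)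
    then show ?thesis
      using orient count_map_move_Min[OF fin ne below] by simp
  qed
  ultimately show ?thesis
    using sub p by (auto simp: mono_pattern_def)
qed

lemma cyclic_interval_eq:
  fixes p q m :: nat
  assumes "q < p" "p < m"
  shows "{(Suc p mod m + t) mod m | t. t < m - p + q} = {v. v < m \<and> (p < v \<or> v \<le> q)}"
proof (intro set_eqI iffI)
  fix v
  assume "v \<in> {(Suc p mod m + t) mod m | t. t < m - p + q}"
  then obtain t where t: "t < m - p + q" "v = (Suc p + t) mod m"
    by (auto simp: mod_add_left_eq)
  show "v \<in> {v. v < m \<and> (p < v \<or> v \<le> q)}"
  proof (cases "Suc p + t < m")
    case True
    then show ?thesis
      using t by simp
  next
    case False
    then have "v = Suc p + t - m"
      using t assms by (simp add: le_mod_geq)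
    then show ?thesis
      using t assms by auto
  qed
next
  fix v
  assume "v \<in> {v. v < m \<and> (p < v \<or> v \<le> q)}"
  then have v: "v < m" "p < v \<or> v \<le> q"
    by auto
  define t where "t = (if p < v then v - Suc p else v + m - Suc p)"
  have "t < m - p + q" "(Suc p mod m + t) mod m = v"
    using v assms by (auto simp: t_def mod_add_left_eq)
  then show "v \<in> {(Suc p mod m + t) mod m | t. t < m - p + q}"
    by blast
qed

lemma one_step_up_move_Min:
  assumes n3: "3 \<le> length ys" and \<Phi>: "\<Phi> \<in> Mon1 xs ys i"
    and p: "p < length xs" and below: "\<forall>b \<in> incr_pos xs ys \<Phi>. b < p"
    and orient_p: "orient_leq (ys ! (i mod length ys)) (xs ! p)"
  defines "P \<equiv> incr_pos xs ys \<Phi>"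
  shows "one_step_up xs ys \<Phi> (count_map (length ys) (Suc i) (insert p (P - {Min P})))
    {v. v < length xs \<and> (p < v \<or> v \<le> Min P)} (i mod length ys)"
proof -
  let ?n = "length ys" and ?B = "insert p (P - {Min P})"
  have pat: "mono_pattern xs ys i P"
    unfolding P_def using n3 \<Phi> by (rule mono_pattern_incr_pos)
  have fin: "finite P" and card: "card P = ?n" and below': "\<forall>b \<in> P. b < p"
    using pat below by (auto simp: mono_pattern_def P_def intro: finite_subset)
  have ne: "P \<noteq> {}"
    using card n3 by auto
  have q: "Min P < p" "\<forall>b \<in> P. Min P \<le> b"
    using fin ne below' by simp_all
  have patB: "mono_pattern xs ys (Suc i) ?B"
    using pat n3 p below' orient_p by (rule mono_pattern_move_Min)
  have finB: "finite ?B" and cardB: "card ?B = ?n"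
    using fin patB by (simp_all add: mono_pattern_def)
  have \<Phi>_eq: "\<Phi> v = count_map ?n i P v" if "v < length xs" for v
    using Mon1_eq_count_map[OF \<Phi> n3 that] by (simp add: P_def)
  show ?thesis
  proof
    show "mono_wind1 xs ys \<Phi>" "mono_wind1 xs ys (count_map ?n (Suc i) ?B)"
      using \<Phi> count_map_in_Mon1[OF n3 patB] by (simp_all add: Mon1_def)
    fix v
    assume "v \<in> {v. v < length xs \<and> (p < v \<or> v \<le> Min P)}"
    then have v: "v < length xs" "p < v \<or> v \<le> Min P"
      by auto
    have "(\<forall>b \<in> P. v \<le> b) \<or> (\<forall>b \<in> P. b < v)"
      using v(2) q below' by auto
    then show "\<Phi> v = i mod ?n"
      using \<Phi>_eq[OF v(1)] count_map_eq_mod_if_beyond[OF fin card] by simp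
    have "(\<forall>b \<in> ?B. v \<le> b) \<or> (\<forall>b \<in> ?B. b < v)"
      using v(2) q below' by auto
    then show "count_map ?n (Suc i) ?B v = Suc (i mod ?n) mod ?n"
      using count_map_eq_mod_if_beyond[OF finB cardB] by (simp add: mod_Suc_eq)
  next
    fix v
    assume "v < length xs" "v \<notin> {v. v < length xs \<and> (p < v \<or> v \<le> Min P)}"
    then show "count_map ?n (Suc i) ?B v = \<Phi> v"
      using \<Phi>_eq count_map_move_Min[OF fin ne below'] by simp
  qed (rule n3)
qed

lemma mono_up_edge_exists:
  assumes n3: "3 \<le> length ys" and \<Phi>: "\<Phi> \<in> Mon1 xs ys i"
    and p: "p < length xs" and below: "\<forall>b \<in> incr_pos xs ys \<Phi>. b < p"
    and orient_p: "orient_leq (ys ! (i mod length ys)) (xs ! p)"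
  shows "\<exists>\<phi>' \<in> Mon1 xs ys (i + 1). mono_up_edge xs ys \<Phi> \<phi>'"
proof -
  let ?m = "length xs" and ?P = "incr_pos xs ys \<Phi>"
  let ?\<phi>' = "count_map (length ys) (Suc i) (insert p (?P - {Min ?P}))"
  have pat: "mono_pattern xs ys i ?P"
    using n3 \<Phi> by (rule mono_pattern_incr_pos)
  then have "?P \<noteq> {}"
    using n3 by (auto simp: mono_pattern_def)
  then have "Min ?P < p"
    using below by simp
  have "?\<phi>' \<in> Mon1 xs ys (Suc i)"
    using n3 mono_pattern_move_Min[OF pat n3 p below orient_p] by (rule count_map_in_Mon1)
  moreover have "mono_up_edge xs ys \<Phi> ?\<phi>'"
  proof (rule one_step_up.mono_up_edgeI)
    show "one_step_up xs ys \<Phi> ?\<phi>' {v. v < ?m \<and> (p < v \<or> v \<le> Min ?P)} (i mod length ys)"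
      using n3 \<Phi> p below orient_p by (rule one_step_up_move_Min)
    show "{v. v < ?m \<and> (p < v \<or> v \<le> Min ?P)} = {(Suc p mod ?m + t) mod ?m | t. t < ?m - p + Min ?P}"
      using cyclic_interval_eq[OF \<open>Min ?P < p\<close> p] by simp
  qed (use p \<open>Min ?P < p\<close> in \<open>auto intro!: mod_less_divisor\<close>)
  ultimately show ?thesis
    by auto
qed

theorem fact3p6:
  fixes xs ys :: "orient list" and i :: nat and \<Phi> :: "nat \<Rightarrow> nat"
  assumes "length xs \<ge> 3" and "length ys \<ge> 3"
    and "non_contractible ys"
    and "i \<in> {1..length ys}"
    and "Mon1 xs ys i \<noteq> {}"
    and "is_max_Mon1 xs ys i \<Phi>"
  shows "(\<exists>\<phi>' \<in> Mon1 xs ys (i + 1). mono_up_edge xs ys \<Phi> \<phi>') \<longleftrightarrow>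
         leq_star (shift i ys @ [ys ! (i mod length ys)]) xs"
proof -
  have n3: "3 \<le> length ys" and i: "i \<le> length ys"
    using assms(2,4) by auto
  have \<Phi>: "\<Phi> \<in> Mon1 xs ys i"
    using assms(6) by (simp add: is_max_Mon1_def)
  show ?thesis
    unfolding leq_star_shift_snoc_iff[OF i]
  proof
    assume "\<exists>\<phi>' \<in> Mon1 xs ys (i + 1). mono_up_edge xs ys \<Phi> \<phi>'"
    then obtain \<phi>' where "\<phi>' \<in> Mon1 xs ys (i + 1)" "mono_up_edge xs ys \<Phi> \<phi>'"
      by blast
    then obtain w where "w < length xs" "\<forall>b \<in> incr_pos xs ys \<Phi>. b < w"
      "orient_leq (ys ! (i mod length ys)) (xs ! w)"
      by (rule mono_up_edge_witness[OF n3 \<Phi>])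
    with mono_pattern_incr_pos[OF n3 \<Phi>]
    show "\<exists>B w. mono_pattern xs ys i B \<and> w < length xs \<and> (\<forall>b \<in> B. b < w) \<and>
        orient_leq (ys ! (i mod length ys)) (xs ! w)"
      by blast
  next
    assume "\<exists>B w. mono_pattern xs ys i B \<and> w < length xs \<and> (\<forall>b \<in> B. b < w) \<and>
        orient_leq (ys ! (i mod length ys)) (xs ! w)"
    then obtain B w where B: "mono_pattern xs ys i B" and w: "w < length xs" "\<forall>b \<in> B. b < w"
      and orient_w: "orient_leq (ys ! (i mod length ys)) (xs ! w)"
      by blast
    show "\<exists>\<phi>' \<in> Mon1 xs ys (i + 1). mono_up_edge xs ys \<Phi> \<phi>'"
      using incr_pos_less_if_max[OF n3 assms(6) B w(2)]
      by (rule mono_up_edge_exists[OF n3 \<Phi> w(1) _ orient_w])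
  qed
qed

end
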